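(* Let $m\in\mathbb N$ and let $(a_{\gamma,\delta})_{|\gamma|+|\delta|=m}$ be a family of complex numbers. If for some $\epsilon_0>0$ it holds that $\hat{\mathcal L}_{\epsilon_0}(\theta)\ne0$ for all $\theta\in\widehat\Lambda_{\epsilon_0}\setminus\{0\}$, then for every $\epsilon>0$ it holds that $\hat{\mathcal L}_\epsilon(\theta)\ne0$ for all $\theta\in\widehat\Lambda_\epsilon\setminus\{0\}$.
   Context: Fix a scaling $\mathfrak s\in\mathbb N^d$; for $\gamma\in\mathbb N_0^d$, $|\gamma|:=\sum_i\mathfrak s_i\gamma_i$. For $\epsilon>0$, $\widehat\Lambda_\epsilon:=\prod_{j=1}^d\mathbb R/(2\pi\epsilon^{-\mathfrak s_j}\mathbb Z)$ (the dual group of $\epsilon^{\mathfrak s_1}\mathbb Z\times\cdots\times\epsilon^{\mathfrak s_d}\mathbb Z$). For $\theta\in\widehat\Lambda_\epsilon$, $\xi^\epsilon_{\theta,j}:=i\epsilon^{-\mathfrak s_j}(1-e^{i\epsilon^{\mathfrak s_j}\theta_j})$, $(\xi^\epsilon_\theta)^\gamma:=\prod_j(\xi^\epsilon_{\theta,j})^{\gamma_j}$, and $\hat{\mathcal L}_\epsilon(\theta):=\sum_{|\gamma|+|\delta|=m}a_{\gamma,\delta}(i\xi^\epsilon_\theta)^\gamma(i\overline{\xi^\epsilon_\theta})^\delta$. *)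

theory Defs
  imports Complex_Main
begin

text \<open>Dimension d; vectors/multi-indices in N^d are functions nat => _ ,
  only the components i < d matter. Scaling s :: nat => nat with s i >= 1 for i < d.\<close>

definition multi_indices :: "nat \<Rightarrow> (nat \<Rightarrow> nat) set" where
  "multi_indices d = {\<gamma>. \<forall>i\<ge>d. \<gamma> i = 0}"

definition sdeg :: "nat \<Rightarrow> (nat \<Rightarrow> nat) \<Rightarrow> (nat \<Rightarrow> nat) \<Rightarrow> nat" where
  "sdeg d s \<gamma> = (\<Sum>i<d. s i * \<gamma> i)"

definition index_pairs :: "nat \<Rightarrow> (nat \<Rightarrow> nat) \<Rightarrow> nat \<Rightarrow> ((nat \<Rightarrow> nat) \<times> (nat \<Rightarrow> nat)) set" where
  "index_pairs d s m = {(\<gamma>, \<delta>). \<gamma> \<in> multi_indices d \<and> \<delta> \<in> multi_indices d \<and>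
      sdeg d s \<gamma> + sdeg d s \<delta> = m}"

definition xi_eps :: "(nat \<Rightarrow> nat) \<Rightarrow> real \<Rightarrow> (nat \<Rightarrow> real) \<Rightarrow> nat \<Rightarrow> complex" where
  "xi_eps s \<epsilon> \<theta> j = \<i> * complex_of_real (\<epsilon> powi (- int (s j)))
      * (1 - exp (\<i> * complex_of_real (\<epsilon> ^ s j * \<theta> j)))"

definition L_hat :: "nat \<Rightarrow> (nat \<Rightarrow> nat) \<Rightarrow> nat \<Rightarrow> ((nat \<Rightarrow> nat) \<Rightarrow> (nat \<Rightarrow> nat) \<Rightarrow> complex)
    \<Rightarrow> real \<Rightarrow> (nat \<Rightarrow> real) \<Rightarrow> complex" where
  "L_hat d s m a \<epsilon> \<theta> = (\<Sum>(\<gamma>, \<delta>) \<in> index_pairs d s m.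
      a \<gamma> \<delta> * (\<Prod>j<d. (\<i> * xi_eps s \<epsilon> \<theta> j) ^ \<gamma> j)
            * (\<Prod>j<d. (\<i> * cnj (xi_eps s \<epsilon> \<theta> j)) ^ \<delta> j))"

text \<open>theta (a representative in R^d) is nonzero in the dual torus
  prod_j R/(2 pi eps^{-s_j} Z).\<close>
definition torus_nonzero :: "nat \<Rightarrow> (nat \<Rightarrow> nat) \<Rightarrow> real \<Rightarrow> (nat \<Rightarrow> real) \<Rightarrow> bool" where
  "torus_nonzero d s \<epsilon> \<theta> \<longleftrightarrow>
     (\<exists>j<d. \<theta> j \<notin> {2 * pi * \<epsilon> powi (- int (s j)) * of_int k | k. True})"

end

theory Submission
  imports Defs
begin

text \<open>Put \<open>c = \<epsilon>/\<epsilon>\<^sub>0\<close> and dilate \<open>\<theta>\<^sub>j \<mapsto> c ^ s\<^sub>j * \<theta>\<^sub>j\<close>. This maps the lattice of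
  periods of \<open>\<Lambda>\<^sub>\<epsilon>\<close> onto that of \<open>\<Lambda>\<^sub>\<epsilon>\<^sub>0\<close>, so it sends nonzero points to nonzero points,
  and it multiplies each \<open>\<xi>\<^sub>j\<close> by \<open>c ^ s\<^sub>j\<close>. The symbol is \<open>s\<close>-homogeneous of degree \<open>m\<close>
  in \<open>\<xi>\<close> and its conjugate, so it gets multiplied by the nonzero constant \<open>c ^ m\<close>.\<close>

definition dilate :: "(nat \<Rightarrow> nat) \<Rightarrow> real \<Rightarrow> (nat \<Rightarrow> real) \<Rightarrow> nat \<Rightarrow> real" where
  "dilate s c \<theta> j = c ^ s j * \<theta> j"

lemma xi_eps_dilate:
  assumes "\<epsilon>\<^sub>0 > 0" "\<epsilon> > 0"
  shows "xi_eps s \<epsilon>\<^sub>0 (dilate s (\<epsilon>/\<epsilon>\<^sub>0) \<theta>) j = of_real ((\<epsilon>/\<epsilon>\<^sub>0) ^ s j) * xi_eps s \<epsilon> \<theta> j"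
proof -
  have phase: "\<epsilon>\<^sub>0 ^ s j * dilate s (\<epsilon>/\<epsilon>\<^sub>0) \<theta> j = \<epsilon> ^ s j * \<theta> j"
    using assms by (simp add: dilate_def power_divide)
  have amplitude: "\<epsilon>\<^sub>0 powi (- int (s j)) = (\<epsilon>/\<epsilon>\<^sub>0) ^ s j * \<epsilon> powi (- int (s j))"
    using assms by (simp add: power_int_minus power_divide field_simps)
  show ?thesis
    unfolding xi_eps_def phase amplitude by (simp add: algebra_simps)
qed

lemma prod_power_weighted_scale:
  fixes c :: "'a :: comm_semiring_1"
  shows "(\<Prod>j<d. (c ^ s j * x j) ^ \<gamma> j) = c ^ sdeg d s \<gamma> * (\<Prod>j<d. x j ^ \<gamma> j)"
  by (simp add: sdeg_def power_mult_distrib prod.distrib power_mult power_sum)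

lemma L_hat_dilate:
  assumes "\<epsilon>\<^sub>0 > 0" "\<epsilon> > 0"
  shows "L_hat d s m a \<epsilon>\<^sub>0 (dilate s (\<epsilon>/\<epsilon>\<^sub>0) \<theta>) = of_real ((\<epsilon>/\<epsilon>\<^sub>0) ^ m) * L_hat d s m a \<epsilon> \<theta>"
proof -
  define c :: complex where "c = of_real (\<epsilon>/\<epsilon>\<^sub>0)"
  define X where "X \<gamma> = (\<Prod>j<d. (\<i> * xi_eps s \<epsilon> \<theta> j) ^ \<gamma> j)" for \<gamma>
  define Y where "Y \<delta> = (\<Prod>j<d. (\<i> * cnj (xi_eps s \<epsilon> \<theta> j)) ^ \<delta> j)" for \<delta>
  have xi: "\<i> * xi_eps s \<epsilon>\<^sub>0 (dilate s (\<epsilon>/\<epsilon>\<^sub>0) \<theta>) j = c ^ s j * (\<i> * xi_eps s \<epsilon> \<theta> j)"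
    and xi_cnj: "\<i> * cnj (xi_eps s \<epsilon>\<^sub>0 (dilate s (\<epsilon>/\<epsilon>\<^sub>0) \<theta>) j) = c ^ s j * (\<i> * cnj (xi_eps s \<epsilon> \<theta> j))"
    for j using xi_eps_dilate[OF assms] by (simp_all add: c_def)
  have "L_hat d s m a \<epsilon>\<^sub>0 (dilate s (\<epsilon>/\<epsilon>\<^sub>0) \<theta>)
      = (\<Sum>(\<gamma>, \<delta>) \<in> index_pairs d s m. a \<gamma> \<delta> * (c ^ sdeg d s \<gamma> * X \<gamma>) * (c ^ sdeg d s \<delta> * Y \<delta>))"
    unfolding L_hat_def xi xi_cnj prod_power_weighted_scale X_def Y_def ..
  also have "\<dots> = (\<Sum>(\<gamma>, \<delta>) \<in> index_pairs d s m. c ^ m * (a \<gamma> \<delta> * X \<gamma> * Y \<delta>))"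
    by (intro sum.cong refl) (auto simp: index_pairs_def power_add[symmetric])
  also have "\<dots> = of_real ((\<epsilon>/\<epsilon>\<^sub>0) ^ m) * L_hat d s m a \<epsilon> \<theta>"
    by (simp add: L_hat_def X_def Y_def c_def sum_distrib_left case_prod_unfold)
  finally show ?thesis .
qed

lemma torus_nonzero_dilate:
  assumes "\<epsilon>\<^sub>0 > 0" "\<epsilon> > 0" "torus_nonzero d s \<epsilon> \<theta>"
  shows "torus_nonzero d s \<epsilon>\<^sub>0 (dilate s (\<epsilon>/\<epsilon>\<^sub>0) \<theta>)"
proof -
  obtain j where "j < d" and off_lattice: "\<And>k. \<theta> j \<noteq> 2 * pi * \<epsilon> powi (- int (s j)) * of_int k"
    using assms(3) unfolding torus_nonzero_def by blast
  have "dilate s (\<epsilon>/\<epsilon>\<^sub>0) \<theta> j \<noteq> 2 * pi * \<epsilon>\<^sub>0 powi (- int (s j)) * of_int k" for k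
    using off_lattice[of k] assms(1,2)
    by (auto simp: dilate_def power_int_minus power_divide field_simps)
  with \<open>j < d\<close> show ?thesis
    unfolding torus_nonzero_def by blast
qed

theorem lemma3p9:
  fixes d m :: nat and s :: "nat \<Rightarrow> nat"
    and a :: "(nat \<Rightarrow> nat) \<Rightarrow> (nat \<Rightarrow> nat) \<Rightarrow> complex" and \<epsilon>\<^sub>0 :: real
  assumes "\<forall>i<d. s i \<ge> 1"
    and "m \<ge> 1"
    and "\<epsilon>\<^sub>0 > 0"
    and "\<forall>\<theta>. torus_nonzero d s \<epsilon>\<^sub>0 \<theta> \<longrightarrow> L_hat d s m a \<epsilon>\<^sub>0 \<theta> \<noteq> 0"
  shows "\<forall>\<epsilon>>0. \<forall>\<theta>. torus_nonzero d s \<epsilon> \<theta> \<longrightarrow> L_hat d s m a \<epsilon> \<theta> \<noteq> 0"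
proof (intro allI impI)
  fix \<epsilon> :: real and \<theta>
  assume "\<epsilon> > 0" and "torus_nonzero d s \<epsilon> \<theta>"
  then have "L_hat d s m a \<epsilon>\<^sub>0 (dilate s (\<epsilon>/\<epsilon>\<^sub>0) \<theta>) \<noteq> 0"
    using assms(3,4) torus_nonzero_dilate by blast
  then show "L_hat d s m a \<epsilon> \<theta> \<noteq> 0"
    using L_hat_dilate[OF assms(3) \<open>\<epsilon> > 0\<close>] by simp
qed

end
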